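(* Let $b>0$, let $f:[-b,b]\to\mathbb{R}$ be an odd function whose restriction to $[0,b]$ is convex, and let $p:[-b,b]\to[0,\infty)$ be a nondecreasing function that does not vanish on $(-b/3,b]$. Then for every $a\in[-b/3,b)$, \[ f\left(\frac{1}{\int_a^b p(x)\,dx}\int_a^b x\,p(x)\,dx\right)\le\frac{1}{\int_a^b p(x)\,dx}\int_a^b f(x)\,p(x)\,dx. \] *)

theory Defs
  imports "HOL-Analysis.Analysis"
begin

end

(*
  Let m be the p-weighted mean of x over [a,b]; the hypotheses on p place it in (0,b).
  Take a support line l(x) = f m + c (x - m) of the convex function f at m. Since f 0 = 0,
  l(0) \<le> 0, i.e. f m \<le> c m. The gap g = f - l is nonnegative on [0,b], and for 0 \<le> y
  oddness of f gives g(-y) = -g(y) + 2 (c m - f m), so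
    g(y) p(y) + g(-y) p(-y) = g(y) (p(y) - p(-y)) + 2 (c m - f m) p(-y) \<ge> 0
  by monotonicity of p. Folding [a,|a|] onto [0,|a|] therefore shows that the integral of g p
  is nonnegative, i.e. the integral of f p is at least that of l p, which is f(m) times the
  integral of p.
*)

theory Submission
  imports Defs
begin

lemma convex_on_support_line:
  fixes f :: "real \<Rightarrow> real"
  assumes cf: "convex_on {a..b} f" and m: "a < m" "m < b"
  obtains c where "\<forall>x\<in>{a..b}. f m + c * (x - m) \<le> f x"
proof -
  have slope: "(f m - f x) / (m - x) \<le> (f y - f m) / (y - m)"
    if "a \<le> x" "x < m" "m < y" "y \<le> b" for x y
  proof -
    have "(f x - f m) / (x - m) \<le> (f x - f y) / (x - y)"
         "(f x - f y) / (x - y) \<le> (f m - f y) / (m - y)"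
      using convex_on_slope_le[OF cf, of x y m] that by auto
    moreover have "(f x - f m) / (x - m) = (f m - f x) / (m - x)"
              and "(f m - f y) / (m - y) = (f y - f m) / (y - m)"
      by (metis minus_diff_eq minus_divide_divide)+
    ultimately show ?thesis by linarith
  qed
  define S where "S = (\<lambda>x. (f m - f x) / (m - x)) ` {a..<m}"
  define c where "c = Sup S"
  have bdd: "bdd_above S"
    unfolding bdd_above_def S_def using slope[of _ b] m
    by (auto intro!: exI[of _ "(f b - f m) / (b - m)"])
  have left: "(f m - f x) / (m - x) \<le> c" if "a \<le> x" "x < m" for x
    unfolding c_def using that bdd by (auto intro!: cSup_upper simp: S_def)
  have right: "c \<le> (f y - f m) / (y - m)" if "m < y" "y \<le> b" for y
    unfolding c_def using that slope m by (auto intro!: cSup_least simp: S_def)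
  have "f m + c * (x - m) \<le> f x" if x: "x \<in> {a..b}" for x
  proof (cases x m rule: linorder_cases)
    case less
    then show ?thesis using left[of x] x by (simp add: divide_le_eq algebra_simps)
  next
    case greater
    then show ?thesis using right[of x] x by (simp add: le_divide_eq algebra_simps)
  qed simp
  then show ?thesis using that by blast
qed

lemma convex_on_Icc_bounded:
  fixes f :: "real \<Rightarrow> real"
  assumes cf: "convex_on {a..b} f" and "a < b"
  obtains K where "\<forall>x\<in>{a..b}. \<bar>f x\<bar> \<le> K"
proof -
  define m where "m = (a + b) / 2"
  obtain c where c: "\<forall>x\<in>{a..b}. f m + c * (x - m) \<le> f x"
    using convex_on_support_line[OF cf, of m] assms by (auto simp: m_def)
  have "\<bar>f x\<bar> \<le> \<bar>f a\<bar> + \<bar>f b\<bar> + \<bar>f m\<bar> + \<bar>c\<bar> * (b - a)"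
    if x: "x \<in> {a..b}" for x
  proof -
    have "f x \<le> max (f a) (f b)" using convex_on_le_max[OF cf x] .
    moreover have "\<bar>c * (x - m)\<bar> \<le> \<bar>c\<bar> * (b - a)"
      unfolding abs_mult using x by (intro mult_left_mono) (auto simp: m_def abs_le_iff field_simps)
    moreover have "f m + c * (x - m) \<le> f x" using c x by blast
    ultimately show ?thesis by (simp add: abs_le_iff) linarith
  qed
  then show ?thesis using that by blast
qed

lemma measurable_on_Icc_if_continuous_off_finite:
  fixes f :: "real \<Rightarrow> real"
  assumes "finite F" and cont: "continuous_on ({a<..<b} - F) f"
  shows "f measurable_on {a..b}"
proof -
  have "{a<..<b} - F \<in> sets lebesgue"
    using assms(1) by (simp add: finite_imp_closed open_Diff)
  then have "f measurable_on ({a<..<b} - F)"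
    using measurable_on_iff_borel_measurable continuous_imp_measurable_on_sets_lebesgue[OF cont]
    by blast
  moreover have "negligible ((({a<..<b} - F) - {a..b}) \<union> ({a..b} - ({a<..<b} - F)))"
    by (rule negligible_subset[of "insert a (insert b F)"]) (use assms(1) in auto)
  ultimately show ?thesis by (rule measurable_on_spike_set)
qed

lemma integrable_on_mult_mono_on:
  fixes g p :: "real \<Rightarrow> real"
  assumes g: "g measurable_on {a..b}" and K: "\<forall>x\<in>{a..b}. \<bar>g x\<bar> \<le> K"
    and p: "mono_on {a..b} p"
  shows "(\<lambda>x. g x * p x) integrable_on {a..b}"
proof (rule measurable_bounded_by_integrable_imp_integrable_real)
  have "g \<in> borel_measurable (lebesgue_on {a..b})"
    using g by (simp add: measurable_on_iff_borel_measurable)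
  moreover have "p \<in> borel_measurable (lebesgue_on {a..b})"
    using integrable_on_mono_on[OF p] by (rule integrable_imp_measurable)
  ultimately show "(\<lambda>x. g x * p x) \<in> borel_measurable (lebesgue_on {a..b})"
    by (rule borel_measurable_times)
  show "(\<lambda>_. K * (\<bar>p a\<bar> + \<bar>p b\<bar>)) integrable_on {a..b}"
    by (rule Henstock_Kurzweil_Integration.integrable_const_ivl)
  show "\<bar>g x * p x\<bar> \<le> K * (\<bar>p a\<bar> + \<bar>p b\<bar>)"
    if x: "x \<in> {a..b}" for x
  proof -
    have "p a \<le> p x" "p x \<le> p b" using mono_onD[OF p] x by auto
    then have "\<bar>p x\<bar> \<le> \<bar>p a\<bar> + \<bar>p b\<bar>" by linarith
    then show ?thesis unfolding abs_mult using K x by (intro mult_mono) auto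
  qed
qed simp

lemma odd_half_convex_integrable_mult:
  fixes f p :: "real \<Rightarrow> real"
  assumes odd: "\<forall>x\<in>{-b..b}. f (-x) = - f x" and cf: "convex_on {0..b} f" and "0 < b"
    and "-b \<le> a" and p: "mono_on {a..b} p"
  shows "(\<lambda>x. f x * p x) integrable_on {a..b}"
proof -
  obtain K where K: "\<forall>x\<in>{0..b}. \<bar>f x\<bar> \<le> K"
    using convex_on_Icc_bounded[OF cf \<open>0 < b\<close>] by blast
  have bounded: "\<forall>x\<in>{a..b}. \<bar>f x\<bar> \<le> K"
  proof
    fix x assume x: "x \<in> {a..b}"
    show "\<bar>f x\<bar> \<le> K"
    proof (cases "0 \<le> x")
      case False
      then show ?thesis
        using K[rule_format, of "-x"] odd[rule_format, of x] x \<open>-b \<le> a\<close> by auto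
    qed (use K x in auto)
  qed
  have pos: "continuous_on {0<..<b} f"
    by (rule convex_on_continuous) (auto intro: convex_on_subset[OF cf])
  have neg: "continuous_on {-b<..<0} f"
  proof (rule continuous_on_eq)
    show "continuous_on {-b<..<0} (\<lambda>x. - f (- x))"
      by (intro continuous_on_minus continuous_on_compose2[OF pos] continuous_on_id) auto
  qed (use odd in auto)
  have "continuous_on ({-b<..<0} \<union> {0<..<b}) f"
    using continuous_on_open_Un[OF _ _ neg pos] by simp
  then have "continuous_on ({a<..<b} - {0}) f"
    by (rule continuous_on_subset) (use \<open>-b \<le> a\<close> in auto)
  then have "f measurable_on {a..b}"
    by (rule measurable_on_Icc_if_continuous_off_finite[rotated]) simp
  then show ?thesis using integrable_on_mult_mono_on[OF _ bounded p] by blast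
qed

lemma integral_pos_if_pos_on_subinterval:
  fixes h :: "real \<Rightarrow> real"
  assumes h: "h integrable_on {a..b}" and nonneg: "\<forall>x\<in>{a..b}. 0 \<le> h x"
    and uv: "a \<le> u" "u < v" "v \<le> b" and e: "\<forall>x\<in>{u..v}. e \<le> h x" "0 < e"
  shows "0 < integral {a..b} h"
proof -
  have h_uv: "h integrable_on {u..v}" using integrable_subinterval_real[OF h] uv by auto
  have "0 < (v - u) * e" using uv e by simp
  also have "\<dots> = integral {u..v} (\<lambda>_. e)" using uv by simp
  also have "\<dots> \<le> integral {u..v} h" using h_uv e by (intro integral_le) auto
  also have "\<dots> \<le> integral {a..b} h"
    using h_uv h nonneg uv by (intro integral_subset_le) auto
  finally show ?thesis .
qed

lemma integral_symmetric_Icc: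
  fixes h :: "real \<Rightarrow> real"
  assumes h: "h integrable_on {-s..s}" and "0 \<le> s"
  shows "integral {-s..s} h = integral {0..s} (\<lambda>y. h y + h (-y))"
proof -
  have neg: "h integrable_on {-s..0}" and pos: "h integrable_on {0..s}"
    using integrable_subinterval_real[OF h] \<open>0 \<le> s\<close> by auto
  have reflected: "(\<lambda>y. h (-y)) integrable_on {0..s}"
    using neg
      Henstock_Kurzweil_Integration.integrable_reflect_real[where f = h and a = "-s" and b = 0]
    by simp
  have "integral {-s..s} h = integral {-s..0} h + integral {0..s} h"
    using Henstock_Kurzweil_Integration.integral_combine[OF _ _ h] \<open>0 \<le> s\<close> by simp
  also have "integral {-s..0} h = integral {0..s} (\<lambda>y. h (-y))"
    using Henstock_Kurzweil_Integration.integral_reflect_real[where f = h and a = "-s" and b = 0]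
    by simp
  also have "integral {0..s} (\<lambda>y. h (-y)) + integral {0..s} h
      = integral {0..s} (\<lambda>y. h y + h (-y))"
    using integral_add[OF pos reflected] by simp
  finally show ?thesis .
qed

lemma integral_from_abs_le:
  fixes h :: "real \<Rightarrow> real"
  assumes h: "h integrable_on {a..b}" and "\<bar>a\<bar> \<le> b"
    and fold: "\<forall>y\<in>{0..-a}. 0 \<le> h y + h (-y)"
  shows "integral {\<bar>a\<bar>..b} h \<le> integral {a..b} h"
proof (cases "0 \<le> a")
  case False
  define s where "s = -a"
  have s: "0 < s" "s \<le> b" "a = -s" using False \<open>\<bar>a\<bar> \<le> b\<close> by (auto simp: s_def)
  have h_sym: "h integrable_on {-s..s}" using integrable_subinterval_real[OF h] s by auto
  have "0 \<le> integral {0..s} (\<lambda>y. h y + h (-y))"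
  proof (rule integral_nonneg)
    show "(\<lambda>y. h y + h (-y)) integrable_on {0..s}"
      using integrable_subinterval_real[OF h_sym] s
        Henstock_Kurzweil_Integration.integrable_reflect_real[where f = h and a = "-s" and b = 0]
      by (intro integrable_add) auto
  qed (use fold s in auto)
  also have "\<dots> = integral {-s..s} h" using integral_symmetric_Icc[OF h_sym] s by simp
  finally have "integral {\<bar>a\<bar>..b} h \<le> integral {-s..s} h + integral {s..b} h"
    using s by simp
  also have "\<dots> = integral {a..b} h"
    using Henstock_Kurzweil_Integration.integral_combine[OF _ _ h, of s] s by simp
  finally show ?thesis .
qed simp

lemma odd_tangent_gap_fold_nonneg:
  fixes f :: "real \<Rightarrow> real"
  assumes "f (-y) = - f y" and above: "f m + c * (y - m) \<le> f y" and "f m \<le> c * m"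
    and "0 \<le> q" "q \<le> r"
  shows "0 \<le> (f y - (f m + c * (y - m))) * r + (f (-y) - (f m + c * (-y - m))) * q"
proof -
  have "(f y - (f m + c * (y - m))) * r + (f (-y) - (f m + c * (-y - m))) * q
      = (f y - (f m + c * (y - m))) * (r - q) + 2 * (c * m - f m) * q"
    using \<open>f (-y) = - f y\<close> by (simp add: algebra_simps)
  moreover have "0 \<le> (f y - (f m + c * (y - m))) * (r - q)"
    using above \<open>q \<le> r\<close> by simp
  moreover have "0 \<le> 2 * (c * m - f m) * q"
    using \<open>f m \<le> c * m\<close> \<open>0 \<le> q\<close> by simp
  ultimately show ?thesis by linarith
qed

lemma odd_tangent_gap_integral_nonneg:
  fixes f p :: "real \<Rightarrow> real"
  assumes odd: "\<forall>x\<in>{-b..b}. f (-x) = - f x"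
    and above: "\<forall>x\<in>{0..b}. f m + c * (x - m) \<le> f x" and "0 \<le> m" "m \<le> b"
    and p: "mono_on {a..b} p" "\<forall>x\<in>{a..b}. 0 \<le> p x" and "\<bar>a\<bar> \<le> b"
    and gap: "(\<lambda>x. (f x - (f m + c * (x - m))) * p x) integrable_on {a..b}"
  shows "0 \<le> integral {a..b} (\<lambda>x. (f x - (f m + c * (x - m))) * p x)"
proof -
  have "f 0 = 0" using odd[rule_format, of 0] \<open>m \<le> b\<close> \<open>0 \<le> m\<close> by simp
  then have tangent_at_0: "f m \<le> c * m"
    using above[rule_format, of 0] \<open>m \<le> b\<close> \<open>0 \<le> m\<close> by simp
  have "0 \<le> integral {\<bar>a\<bar>..b} (\<lambda>x. (f x - (f m + c * (x - m))) * p x)"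
  proof (rule integral_nonneg)
    show "(\<lambda>x. (f x - (f m + c * (x - m))) * p x) integrable_on {\<bar>a\<bar>..b}"
      by (rule integrable_subinterval_real[OF gap]) auto
  qed (use above p(2) in auto)
  also have "\<dots> \<le> integral {a..b} (\<lambda>x. (f x - (f m + c * (x - m))) * p x)"
  proof (rule integral_from_abs_le[OF gap \<open>\<bar>a\<bar> \<le> b\<close>], rule ballI)
    fix y assume y: "y \<in> {0..-a}"
    then have "y \<in> {a..b}" "-y \<in> {a..b}" using \<open>\<bar>a\<bar> \<le> b\<close> by auto
    then have "p (-y) \<le> p y" "0 \<le> p (-y)" using mono_onD[OF p(1)] p(2) y by auto
    moreover have "f (-y) = - f y" "f m + c * (y - m) \<le> f y"
      using odd above y \<open>\<bar>a\<bar> \<le> b\<close> by auto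
    ultimately show "0 \<le> (f y - (f m + c * (y - m))) * p y
        + (f (-y) - (f m + c * (-y - m))) * p (-y)"
      using odd_tangent_gap_fold_nonneg[where f = f, OF _ _ tangent_at_0] by blast
  qed
  finally show ?thesis .
qed

lemma first_moment_bounds:
  fixes p :: "real \<Rightarrow> real"
  assumes p: "mono_on {a..b} p" "\<forall>x\<in>{a..b}. 0 \<le> p x"
    and t: "\<bar>a\<bar> < t" "t < b" "0 < p t"
  shows "0 < integral {a..b} (\<lambda>x. x * p x)"
    and "integral {a..b} (\<lambda>x. x * p x) < b * integral {a..b} p"
proof -
  have p_ge: "p t \<le> p x" if "t \<le> x" "x \<le> b" for x
    using mono_onD[OF p(1)] that t by auto
  have int_p: "p integrable_on {a..b}" using p(1) by (rule integrable_on_mono_on)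
  have "(\<lambda>x. x) measurable_on {a..b}"
    by (simp add: measurable_on_iff_borel_measurable continuous_imp_measurable_on_sets_lebesgue)
  moreover have "\<forall>x\<in>{a..b}. \<bar>x\<bar> \<le> b" using t by auto
  ultimately have int_xp: "(\<lambda>x. x * p x) integrable_on {a..b}"
    using integrable_on_mult_mono_on p(1) by blast
  have "0 < integral {\<bar>a\<bar>..b} (\<lambda>x. x * p x)"
  proof (rule integral_pos_if_pos_on_subinterval[where u = t and v = b and e = "t * p t"])
    show "(\<lambda>x. x * p x) integrable_on {\<bar>a\<bar>..b}"
      by (rule integrable_subinterval_real[OF int_xp]) auto
    show "\<forall>x\<in>{t..b}. t * p t \<le> x * p x"
      using p_ge t by (auto intro!: mult_mono)
  qed (use p(2) t in auto)
  also have "\<dots> \<le> integral {a..b} (\<lambda>x. x * p x)"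
  proof (rule integral_from_abs_le[OF int_xp], rule_tac [2] ballI)
    fix y assume "y \<in> {0..-a}"
    then have "0 \<le> y" "p (-y) \<le> p y" using mono_onD[OF p(1)] t by auto
    then show "0 \<le> y * p y + (- y) * p (- y)"
      by (simp add: mult_left_mono)
  qed (use t in auto)
  finally show "0 < integral {a..b} (\<lambda>x. x * p x)" .
  have int_rest: "(\<lambda>x. (b - x) * p x) integrable_on {a..b}"
    using integrable_diff[OF integrable_on_cmult_left[OF int_p, of b] int_xp]
    by (simp add: algebra_simps)
  have "0 < integral {a..b} (\<lambda>x. (b - x) * p x)"
  proof (rule integral_pos_if_pos_on_subinterval[OF int_rest, where u = t and v = "(t + b) / 2"])
    show "\<forall>x\<in>{t..(t + b) / 2}. (b - (t + b) / 2) * p t \<le> (b - x) * p x"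
      using p_ge t by (auto intro!: mult_mono)
  qed (use p(2) t in auto)
  also have "integral {a..b} (\<lambda>x. (b - x) * p x)
      = b * integral {a..b} p - integral {a..b} (\<lambda>x. x * p x)"
    using integral_diff[OF integrable_on_cmult_left[OF int_p, of b] int_xp]
    by (simp add: algebra_simps)
  finally show "integral {a..b} (\<lambda>x. x * p x) < b * integral {a..b} p" by simp
qed

lemma odd_half_convex_jensen:
  fixes f p :: "real \<Rightarrow> real"
  assumes odd: "\<forall>x\<in>{-b..b}. f (-x) = - f x" and cf: "convex_on {0..b} f"
    and p: "mono_on {a..b} p" "\<forall>x\<in>{a..b}. 0 \<le> p x" and "\<bar>a\<bar> \<le> b"
    and int_fp: "(\<lambda>x. f x * p x) integrable_on {a..b}"
    and moment: "0 < integral {a..b} (\<lambda>x. x * p x)"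
      "integral {a..b} (\<lambda>x. x * p x) < b * integral {a..b} p"
  shows "f ((1 / integral {a..b} p) * integral {a..b} (\<lambda>x. x * p x))
         \<le> (1 / integral {a..b} p) * integral {a..b} (\<lambda>x. f x * p x)"
proof -
  define W where "W = integral {a..b} p"
  define M where "M = integral {a..b} (\<lambda>x. x * p x)"
  define m where "m = (1 / W) * M"
  have int_p: "p integrable_on {a..b}" using p(1) by (rule integrable_on_mono_on)
  have int_xp: "(\<lambda>x. x * p x) integrable_on {a..b}"
    using moment(1) not_integrable_integral by force \<comment> \<open>its integral is nonzero\<close>
  have "0 \<le> W" unfolding W_def using int_p p(2) by (intro integral_nonneg) auto
  then have "0 < W" using moment by (cases "W = 0") (auto simp: W_def)
  then have m: "0 < m" "m < b" using moment by (auto simp: m_def M_def W_def field_simps)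
  obtain c where above: "\<forall>x\<in>{0..b}. f m + c * (x - m) \<le> f x"
    using convex_on_support_line[OF cf m] by blast
  have scaled: "(\<lambda>x. k * p x) integrable_on {a..b}"
    "(\<lambda>x. k * (x * p x)) integrable_on {a..b}" for k
    using integrable_on_cmult_left[OF int_p, of k] integrable_on_cmult_left[OF int_xp, of k]
    by simp_all
  have line_eq: "(\<lambda>x. (f m + c * (x - m)) * p x)
      = (\<lambda>x. (f m - c * m) * p x + c * (x * p x))"
    by (simp add: fun_eq_iff algebra_simps)
  have int_line: "(\<lambda>x. (f m + c * (x - m)) * p x) integrable_on {a..b}"
    unfolding line_eq by (intro integrable_add scaled)
  have "integral {a..b} (\<lambda>x. (f m + c * (x - m)) * p x) = (f m - c * m) * W + c * M"
    unfolding line_eq W_def M_def by (simp add: integral_add scaled)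
  also have "\<dots> = f m * W" using \<open>0 < W\<close> by (simp add: m_def algebra_simps)
  finally have line: "integral {a..b} (\<lambda>x. (f m + c * (x - m)) * p x) = f m * W" .
  have "0 \<le> integral {a..b} (\<lambda>x. (f x - (f m + c * (x - m))) * p x)"
    using integrable_diff[OF int_fp int_line] m
    by (intro odd_tangent_gap_integral_nonneg[OF odd above _ _ p \<open>\<bar>a\<bar> \<le> b\<close>])
      (simp_all add: algebra_simps)
  also have "\<dots> = integral {a..b} (\<lambda>x. f x * p x) - f m * W"
    using integral_diff[OF int_fp int_line] line by (simp add: algebra_simps)
  finally have "f m * W \<le> integral {a..b} (\<lambda>x. f x * p x)" by simp
  then have "f m \<le> (1 / W) * integral {a..b} (\<lambda>x. f x * p x)"
    using \<open>0 < W\<close> by (simp add: field_simps)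
  then show ?thesis unfolding m_def W_def M_def .
qed

theorem corollary1:
  fixes f p :: "real \<Rightarrow> real" and a b :: real
  assumes "b > 0"
    and "\<forall>x\<in>{-b..b}. f (-x) = - f x"
    and "convex_on {0..b} f"
    and "mono_on {-b..b} p"
    and "\<forall>x\<in>{-b..b}. p x \<ge> 0"
    and "\<forall>x\<in>{-b/3<..b}. p x \<noteq> 0"
    and "a \<in> {-b/3..<b}"
  shows "f ((1 / integral {a..b} p) * integral {a..b} (\<lambda>x. x * p x))
         \<le> (1 / integral {a..b} p) * integral {a..b} (\<lambda>x. f x * p x)"
proof -
  have a: "-b/3 \<le> a" "a < b" and "\<bar>a\<bar> < b" using assms(1,7) by auto
  have p: "mono_on {a..b} p" "\<forall>x\<in>{a..b}. 0 \<le> p x"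
    using mono_on_subset[OF assms(4)] assms(5) a assms(1) by auto
  define t where "t = (\<bar>a\<bar> + b) / 2"
  have "\<bar>a\<bar> < t" "t < b" using \<open>\<bar>a\<bar> < b\<close> by (auto simp: t_def)
  moreover have "p t \<noteq> 0" "0 \<le> p t"
    using assms(5,6) calculation \<open>\<bar>a\<bar> < b\<close> by auto
  ultimately have t: "\<bar>a\<bar> < t" "t < b" "0 < p t" by auto
  show ?thesis
  proof (rule odd_half_convex_jensen[OF assms(2,3) p])
    show "(\<lambda>x. f x * p x) integrable_on {a..b}"
      using assms(1) a by (intro odd_half_convex_integrable_mult[OF assms(2,3) _ _ p(1)]) auto
  qed (use first_moment_bounds[OF p t] \<open>\<bar>a\<bar> < b\<close> in auto)
qed

end
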